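(* Let $\mathcal X$ be a barreled topological real vector space, $\sigma$ a symplectic form on $\mathcal X$, $\mathcal X_{\rm bulk}\subset\mathcal X$ a linear subspace, $\mathcal X_{\rm bd}$ a topological real vector space, and $\partial:\mathcal X_{\rm bulk}'\to\mathcal X_{\rm bd}'$ a linear map whose restriction to $\mathcal X'$ (each $u\in\mathcal X'$ being regarded as an element of $\mathcal X_{\rm bulk}'$ by restriction to $\mathcal X_{\rm bulk}$) is continuous $\mathcal X'\to\mathcal X_{\rm bd}'$. Let $\eta$ be a symmetric bilinear form on $\mathcal X$ which is strictly positive ($(v\cdot\eta v)>0$ for $v\neq0$) and satisfies $|v_1\cdot\sigma v_2|\le (v_1\cdot\eta v_1)^{1/2}(v_2\cdot\eta v_2)^{1/2}$ for all $v_1,v_2\in\mathcal X$. Let $\mathcal X^{\rm cpl}$ be the real Hilbert space completion of $\mathcal X$ with respect to the inner product $\eta$, with extended inner product $\eta^{\rm cpl}$ (so $\mathcal X\subset\mathcal X^{\rm cpl}$). Assume (Hypothesis 1) that the map $\eta:\mathcal X\to\mathcal X'$, $v\mapsto (w\mapsto w\cdot\eta v)$, is continuous. Then: (i) for every $\tilde u\in\mathcal X^{\rm cpl}$ the functional $\eta^{\rm cpl}\tilde u: v\mapsto (v\cdot\eta^{\rm cpl}\tilde u)$ on $\mathcal X$ belongs to $\mathcal X'$, and for every $f\in\mathcal X_{\rm bd}$ the linear functional $\mathcal X^{\rm cpl}\ni\tilde u\mapsto \big(\partial(\eta^{\rm cpl}\tilde u)\big)(f)$ is continuous; hence there is a unique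 element $\partial' f\in\mathcal X^{\rm cpl}$ with $(\partial'f\cdot\eta^{\rm cpl}\tilde u)=\big(\partial(\eta^{\rm cpl}\tilde u)\big)(f)$ for all $\tilde u\in\mathcal X^{\rm cpl}$, i.e. $\mathrm{Ran}(\partial'\restriction\mathcal X_{\rm bd})\subset\mathcal X^{\rm cpl}$. (ii) If moreover (Hypothesis 2) for every $u\in\mathcal X'$ the condition $\partial u=0$ implies that $u$ vanishes on $\mathcal X_{\rm bulk}$, then $$\big(\{\partial'f: f\in\mathcal X_{\rm bd}\}\big)^{\rm cl}\supset(\mathcal X_{\rm bulk})^{\rm cl},$$ where both closures are taken in the Hilbert space $\mathcal X^{\rm cpl}$.
   Context: For a topological real vector space $\mathcal Y$, $\mathcal Y'$ denotes its continuous dual equipped with the weak$^*$ topology. For a bilinear form $\eta$ on $\mathcal X$, $(v_1\cdot\eta v_2)$ denotes its value on $v_1,v_2$. The map $\partial'$ is the dual of $\partial$; on $\mathcal X_{\rm bd}$ it is understood via the identification in (i). *)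

theory Defs
  imports "HOL-Analysis.Analysis"
begin

definition tvs :: "'a::real_vector topology \<Rightarrow> bool" where
  "tvs T \<longleftrightarrow> topspace T = UNIV
     \<and> continuous_map (prod_topology T T) T (\<lambda>(x, y). x + y)
     \<and> continuous_map (prod_topology euclideanreal T) T (\<lambda>(c, x). c *\<^sub>R x)"

definition barrel :: "'a::real_vector topology \<Rightarrow> 'a set \<Rightarrow> bool" where
  "barrel T B \<longleftrightarrow> closedin T B \<and> convex B
     \<and> (\<forall>c x. \<bar>c\<bar> \<le> 1 \<longrightarrow> x \<in> B \<longrightarrow> c *\<^sub>R x \<in> B)
     \<and> (\<forall>x. \<exists>e>0. \<forall>t. \<bar>t\<bar> \<le> e \<longrightarrow> t *\<^sub>R x \<in> B)"

definition barreled :: "'a::real_vector topology \<Rightarrow> bool" where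
  "barreled T \<longleftrightarrow> tvs T \<and>
     (\<forall>B. barrel T B \<longrightarrow> (\<exists>U. openin T U \<and> 0 \<in> U \<and> U \<subseteq> B))"

definition cdual :: "'a::real_vector topology \<Rightarrow> ('a \<Rightarrow> real) set" where
  "cdual T = {u. linear u \<and> continuous_map T euclideanreal u}"

text \<open>Continuous dual of a linear subspace S (with subspace topology); functionals are
  represented by functions vanishing outside S.\<close>
definition sdual :: "'a::real_vector topology \<Rightarrow> 'a set \<Rightarrow> ('a \<Rightarrow> real) set" where
  "sdual T S = {u. (\<forall>x\<in>S. \<forall>y\<in>S. u (x + y) = u x + u y)
                 \<and> (\<forall>c. \<forall>x\<in>S. u (c *\<^sub>R x) = c * u x)
                 \<and> continuous_map (subtopology T S) euclideanreal u
                 \<and> (\<forall>x. x \<notin> S \<longrightarrow> u x = 0)}"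

definition restr :: "'a set \<Rightarrow> ('a \<Rightarrow> real) \<Rightarrow> ('a \<Rightarrow> real)" where
  "restr S u = (\<lambda>x. if x \<in> S then u x else 0)"

definition weak_star :: "('a \<Rightarrow> real) set \<Rightarrow> ('a \<Rightarrow> real) topology" where
  "weak_star D = subtopology (product_topology (\<lambda>_. euclideanreal) UNIV) D"

definition symplectic_form :: "('a::real_vector \<Rightarrow> 'a \<Rightarrow> real) \<Rightarrow> bool" where
  "symplectic_form \<sigma> \<longleftrightarrow> (\<forall>v. linear (\<sigma> v)) \<and> (\<forall>w. linear (\<lambda>v. \<sigma> v w))
     \<and> (\<forall>v w. \<sigma> v w = - \<sigma> w v)
     \<and> (\<forall>v. (\<forall>w. \<sigma> v w = 0) \<longrightarrow> v = 0)"

end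

theory Submission
  imports Defs
begin

text \<open>
  Hypothesis 1 makes each functional \<open>x \<mapsto> \<eta>(w, x)\<close> continuous, so the \<open>\<eta>\<close>-polar of the unit
  ball of the completion is a barrel. In a barreled space it is therefore a neighbourhood of \<open>0\<close>,
  i.e. the completion norm is bounded near \<open>0\<close>, and every \<open>v \<mapsto> \<eta>\<^sup>c\<^sup>p\<^sup>l(v, u)\<close> is
  continuous on \<open>X\<close>. Composing with the weak-* continuous \<open>\<partial>\<close> and evaluating at \<open>f\<close> gives a
  continuous linear functional of \<open>u\<close>, whose Riesz representative is \<open>\<partial>'f\<close>.
  The range of \<open>\<partial>'\<close> is a linear subspace, and a vector orthogonal to it has
  \<open>\<partial>(\<eta>\<^sup>c\<^sup>p\<^sup>l u) = 0\<close>; Hypothesis 2 then makes it orthogonal to \<open>X\<^sub>b\<^sub>u\<^sub>l\<^sub>k\<close>, so by the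
  projection theorem \<open>X\<^sub>b\<^sub>u\<^sub>l\<^sub>k\<close> lies in the closure of that range.
\<close>

section \<open>Projection and Riesz representation in Hilbert spaces\<close>

lemma subspace_closure:
  fixes A :: "'a::real_normed_vector set"
  assumes "subspace A" shows "subspace (closure A)"
proof -
  have "- x \<in> closure A" if "x \<in> closure A" for x
  proof -
    have "(-1) *\<^sub>R x \<in> (*\<^sub>R) (-1) ` closure A" using that by blast
    also have "\<dots> = closure ((*\<^sub>R) (-1) ` A)" by (rule closure_scaleR)
    also have "\<dots> \<subseteq> closure A" using assms by (intro closure_mono) (auto intro: subspace_neg)
    finally show ?thesis by simp
  qed
  moreover have "convex_cone (closure A)"
    using assms unfolding subspace_convex_cone_symmetric convex_cone_def
    by (meson Convex.cone_def cone_closure conic_def convex_closure closure_eq_empty)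
  ultimately show ?thesis by (simp add: subspace_convex_cone_symmetric)
qed

lemma norm_diff_sq_midpoint:
  fixes a b x :: "'h::real_inner"
  shows "norm (a - b)^2 = 2 * norm (x - a)^2 + 2 * norm (x - b)^2 - 4 * norm (x - midpoint a b)^2"
  unfolding midpoint_def power2_norm_eq_inner
  by (simp add: inner_diff inner_add inner_commute algebra_simps)

lemma closest_point_exists_complete:
  fixes S :: "'h::{real_inner, complete_space} set"
  assumes "closed S" "convex S" "S \<noteq> {}"
  obtains m where "m \<in> S" "\<And>y. y \<in> S \<Longrightarrow> norm (x - m) \<le> norm (x - y)"
proof -
  define d where "d = (INF y\<in>S. norm (x - y)^2)"
  have bdd: "bdd_below ((\<lambda>y. norm (x - y)^2) ` S)" by (rule bdd_belowI[of _ 0]) auto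
  have d_le: "d \<le> norm (x - y)^2" if "y \<in> S" for y
    unfolding d_def using bdd that by (rule cINF_lower)
  have "\<exists>y\<in>S. norm (x - y)^2 < d + inverse (real (Suc n))" for n
    unfolding d_def using assms(3) by (intro cINF_less_iff[THEN iffD1]) (auto simp: d_def bdd)
  then obtain ms where ms: "\<And>n. ms n \<in> S" "\<And>n. norm (x - ms n)^2 < d + inverse (real (Suc n))"
    by metis
  \<comment> \<open>the parallelogram law makes a minimizing sequence Cauchy\<close>
  have close: "norm (ms n - ms k)^2 \<le> 2 * inverse (real (Suc n)) + 2 * inverse (real (Suc k))" for n k
  proof -
    have "midpoint (ms n) (ms k) \<in> S"
      using convexD[OF assms(2) ms(1) ms(1), of "1/2" "1/2"]
      by (simp add: midpoint_def scaleR_add_right)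
    then show ?thesis
      using d_le norm_diff_sq_midpoint[of "ms n" "ms k" x] ms(2)[of n] ms(2)[of k] by fastforce
  qed
  have "Cauchy ms"
  proof (rule CauchyI)
    fix e :: real assume "e > 0"
    then obtain N where N: "inverse (real (Suc N)) < e^2 / 4"
      using reals_Archimedean by (metis divide_pos_pos zero_less_numeral zero_less_power)
    have "norm (ms a - ms b) < e" if "a \<ge> N" "b \<ge> N" for a b
    proof -
      have "inverse (real (Suc a)) \<le> inverse (real (Suc N))" "inverse (real (Suc b)) \<le> inverse (real (Suc N))"
        using that by (simp_all add: field_simps)
      then have "norm (ms a - ms b)^2 < e^2" using close[of a b] N by linarith
      then show ?thesis using \<open>e > 0\<close> by (simp add: power_less_imp_less_base)
    qed
    then show "\<exists>N. \<forall>m\<ge>N. \<forall>n\<ge>N. norm (ms m - ms n) < e" by blast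
  qed
  then obtain m where lim: "ms \<longlonglongrightarrow> m" using Cauchy_convergent_iff convergent_def by blast
  have "m \<in> S" using assms(1) ms(1) lim closed_sequentially by blast
  moreover have "norm (x - m) \<le> norm (x - y)" if "y \<in> S" for y
  proof -
    have "norm (x - m)^2 \<le> d"
    proof (rule LIMSEQ_le)
      show "(\<lambda>n. norm (x - ms n)^2) \<longlonglongrightarrow> norm (x - m)^2" using lim by (intro tendsto_intros)
      show "(\<lambda>n. d + inverse (real (Suc n))) \<longlonglongrightarrow> d"
        using tendsto_add[OF tendsto_const LIMSEQ_inverse_real_of_nat] by simp
      show "\<exists>N. \<forall>n\<ge>N. norm (x - ms n)^2 \<le> d + inverse (real (Suc n))"
        using ms(2) less_imp_le by blast
    qed
    then show ?thesis using d_le[OF that] by (meson norm_ge_zero order_trans power2_le_imp_le)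
  qed
  ultimately show ?thesis using that by blast
qed

lemma orthogonal_if_closest_in_subspace:
  fixes M :: "'h::real_inner set"
  assumes "subspace M" "m \<in> M" "\<And>y. y \<in> M \<Longrightarrow> norm (x - m) \<le> norm (x - y)" "y \<in> M"
  shows "inner (x - m) y = 0"
proof (cases "y = 0")
  case False
  define t where "t = inner (x - m) y / inner y y"
  have "m + t *\<^sub>R y \<in> M" using assms by (simp add: subspace_add subspace_scale)
  then have "norm (x - m)^2 \<le> norm ((x - m) - t *\<^sub>R y)^2"
    using assms(3) by (simp add: algebra_simps)
  also have "\<dots> = norm (x - m)^2 - 2 * t * inner (x - m) y + t^2 * inner y y"
    unfolding power2_norm_eq_inner by (simp add: inner_diff inner_commute power2_eq_square)
  also have "\<dots> = norm (x - m)^2 - (inner (x - m) y)^2 / inner y y"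
    using False unfolding t_def by (simp add: field_simps power2_eq_square)
  finally show ?thesis using False by (auto simp: divide_le_0_iff dest: inner_gt_zero_iff[THEN iffD2])
qed simp

lemma orthogonal_projection_exists:
  fixes M :: "'h::{real_inner, complete_space} set"
  assumes "closed M" "subspace M"
  obtains m where "m \<in> M" "\<And>y. y \<in> M \<Longrightarrow> inner (x - m) y = 0"
proof -
  have "convex M" "M \<noteq> {}" using assms(2) subspace_0 subspace_imp_convex by auto
  then obtain m where "m \<in> M" "\<And>y. y \<in> M \<Longrightarrow> norm (x - m) \<le> norm (x - y)"
    using closest_point_exists_complete assms(1) by metis
  then show ?thesis using that orthogonal_if_closest_in_subspace[OF assms(2)] by blast
qed

lemma riesz_representation:
  fixes \<phi> :: "'h::{real_inner, complete_space} \<Rightarrow> real"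
  assumes lin: "linear \<phi>" and cont: "continuous_on UNIV \<phi>"
  shows "\<exists>!p. \<forall>u. inner p u = \<phi> u"
proof (rule ex_ex1I)
  show "\<exists>p. \<forall>u. inner p u = \<phi> u"
  proof (cases "\<forall>u. \<phi> u = 0")
    case False
    then obtain z where z: "\<phi> z \<noteq> 0" by blast
    define K where "K = \<phi> -` {0}"
    have "closed K"
      unfolding K_def using cont by (simp add: continuous_closed_vimage continuous_on_eq_continuous_at)
    moreover have "subspace K"
      unfolding K_def subspace_def using lin by (simp add: linear_add linear_scale linear_0)
    ultimately obtain m where m: "m \<in> K" "\<And>y. y \<in> K \<Longrightarrow> inner (z - m) y = 0"
      using orthogonal_projection_exists by metis
    define w where "w = z - m"
    have \<phi>w: "\<phi> w = \<phi> z" using m(1) lin unfolding w_def K_def by (simp add: linear_diff)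
    then have "w \<noteq> 0" using z by (auto simp: linear_0[OF lin])
    have "inner ((\<phi> w / inner w w) *\<^sub>R w) u = \<phi> u" for u
    proof -
      have "u - (\<phi> u / \<phi> w) *\<^sub>R w \<in> K"
        unfolding K_def using \<phi>w z lin by (simp add: linear_diff linear_scale)
      from m(2)[OF this] have "inner w u = (\<phi> u / \<phi> w) * inner w w"
        unfolding w_def[symmetric] by (simp add: inner_diff)
      then show ?thesis using \<open>w \<noteq> 0\<close> \<phi>w z by (simp add: field_simps)
    qed
    then show ?thesis by blast
  qed (auto intro: exI[of _ 0])
next
  show "p = q" if "\<forall>u. inner p u = \<phi> u" "\<forall>u. inner q u = \<phi> u" for p q
    using that vector_eq_rdot by metis
qed

lemma in_closure_subspaceI:
  fixes A :: "'h::{real_inner, complete_space} set"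
  assumes sub: "subspace A" and orth: "\<And>u. (\<forall>a\<in>A. inner a u = 0) \<Longrightarrow> inner b u = 0"
  shows "b \<in> closure A"
proof -
  obtain m where m: "m \<in> closure A" "\<And>y. y \<in> closure A \<Longrightarrow> inner (b - m) y = 0"
    using orthogonal_projection_exists[OF closed_closure subspace_closure[OF sub]] by metis
  have "\<forall>a\<in>A. inner a (b - m) = 0" using m(2) closure_subset by (force simp: inner_commute)
  then have "inner b (b - m) = 0" by (rule orth)
  moreover have "inner m (b - m) = 0" using m by (simp add: inner_commute)
  ultimately have "inner (b - m) (b - m) = 0" by (simp add: inner_diff_left)
  then show ?thesis using m(1) by simp
qed

definition riesz_rep :: "('h::real_inner \<Rightarrow> real) \<Rightarrow> 'h" where
  "riesz_rep \<phi> = (THE p. \<forall>u. inner p u = \<phi> u)"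

lemma inner_riesz_rep:
  fixes \<phi> :: "'h::{real_inner, complete_space} \<Rightarrow> real"
  assumes "linear \<phi>" "continuous_on UNIV \<phi>"
  shows "inner (riesz_rep \<phi>) u = \<phi> u"
  using theI'[OF riesz_representation[OF assms]] unfolding riesz_rep_def by blast

lemma linear_riesz_rep:
  fixes B :: "'h::{real_inner, complete_space} \<Rightarrow> 'b::real_vector \<Rightarrow> real"
  assumes lin: "\<And>f. linear (\<lambda>u. B u f)" and cont: "\<And>f. continuous_on UNIV (\<lambda>u. B u f)"
    and lin_f: "\<And>u. linear (B u)"
  shows "linear (\<lambda>f. riesz_rep (\<lambda>u. B u f))"
proof (rule linearI)
  fix f g
  have "inner (riesz_rep (\<lambda>u. B u (f + g))) z
      = inner (riesz_rep (\<lambda>u. B u f) + riesz_rep (\<lambda>u. B u g)) z" for z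
    unfolding inner_add_left inner_riesz_rep[OF lin cont] by (rule linear_add[OF lin_f])
  then show "riesz_rep (\<lambda>u. B u (f + g)) = riesz_rep (\<lambda>u. B u f) + riesz_rep (\<lambda>u. B u g)"
    by (rule vector_eq_rdot[THEN iffD1, OF allI])
next
  fix c :: real and f
  have "inner (riesz_rep (\<lambda>u. B u (c *\<^sub>R f))) z = inner (c *\<^sub>R riesz_rep (\<lambda>u. B u f)) z" for z
    unfolding inner_scaleR_left inner_riesz_rep[OF lin cont] by (simp add: linear_scale[OF lin_f])
  then show "riesz_rep (\<lambda>u. B u (c *\<^sub>R f)) = c *\<^sub>R riesz_rep (\<lambda>u. B u f)"
    by (rule vector_eq_rdot[THEN iffD1, OF allI])
qed

lemma closure_range_riesz_rep:
  fixes B :: "'h::{real_inner, complete_space} \<Rightarrow> 'b::real_vector \<Rightarrow> real"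
  assumes lin: "\<And>f. linear (\<lambda>u. B u f)" and cont: "\<And>f. continuous_on UNIV (\<lambda>u. B u f)"
    and lin_f: "\<And>u. linear (B u)"
    and annihilated: "\<And>u. (\<forall>f. B u f = 0) \<Longrightarrow> inner b u = 0"
  shows "b \<in> closure (range (\<lambda>f. riesz_rep (\<lambda>u. B u f)))"
proof (rule in_closure_subspaceI)
  show "subspace (range (\<lambda>f. riesz_rep (\<lambda>u. B u f)))"
    by (rule linear_subspace_image[OF linear_riesz_rep[OF lin cont lin_f] subspace_UNIV])
  show "inner b u = 0" if "\<forall>a\<in>range (\<lambda>f. riesz_rep (\<lambda>u. B u f)). inner a u = 0" for u
    using that annihilated by (simp add: inner_riesz_rep[OF lin cont])
qed

section \<open>Barreled spaces\<close>

lemma tvs_continuous_map_affine: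
  assumes "tvs T"
  shows "continuous_map T T (\<lambda>y. c *\<^sub>R (y - a))"
proof -
  have top: "topspace T = UNIV"
    and add: "continuous_map (prod_topology T T) T (\<lambda>(x, y). x + y)"
    and scale: "continuous_map (prod_topology euclideanreal T) T (\<lambda>(c, x). c *\<^sub>R x)"
    using assms unfolding tvs_def by auto
  have "continuous_map T T (\<lambda>y. y - a)"
    using continuous_map_compose[of _ _ "\<lambda>y. (y, - a)", OF _ add] top
    by (simp add: continuous_map_paired o_def)
  then show ?thesis
    using continuous_map_compose[of _ _ "\<lambda>y. (c, y - a)", OF _ scale]
    by (simp add: continuous_map_paired o_def)
qed

lemma tvs_linear_continuous_if_bounded:
  assumes tvs: "tvs T" and lin: "linear g" and U: "openin T U" "0 \<in> U"
    and bound: "\<And>x. x \<in> U \<Longrightarrow> \<bar>g x\<bar> \<le> C"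
  shows "continuous_map T euclideanreal g"
  unfolding Met_TC.continuous_map_to_metric[unfolded mtopology_is_euclidean]
proof (intro ballI allI impI)
  fix a and e :: real assume "e > 0"
  have "C \<ge> 0" using bound[OF U(2)] by simp
  define c where "c = (C + 1) / e"
  have "c > 0" using \<open>C \<ge> 0\<close> \<open>e > 0\<close> by (simp add: c_def)
  define V where "V = {y \<in> topspace T. c *\<^sub>R (y - a) \<in> U}"
  have "openin T V"
    unfolding V_def by (rule openin_continuous_map_preimage[OF tvs_continuous_map_affine[OF tvs] U(1)])
  moreover have "a \<in> V" using U(2) tvs unfolding V_def tvs_def by simp
  moreover have "dist (g y) (g a) < e" if "y \<in> V" for y
  proof -
    have "c * \<bar>g y - g a\<bar> \<le> C"
      using bound[of "c *\<^sub>R (y - a)"] that \<open>c > 0\<close> unfolding V_def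
      by (simp add: linear_scale[OF lin] linear_diff[OF lin] abs_mult)
    then have "\<bar>g y - g a\<bar> \<le> C * e / (C + 1)"
      using \<open>c > 0\<close> \<open>C \<ge> 0\<close> \<open>e > 0\<close> by (simp add: c_def field_simps)
    also have "\<dots> < e" using \<open>e > 0\<close> \<open>C \<ge> 0\<close> by (simp add: field_simps)
    finally show ?thesis by (simp add: dist_real_def)
  qed
  ultimately show "\<exists>V. openin T V \<and> a \<in> V \<and> (\<forall>y\<in>V. g y \<in> Met_TC.mball (g a) e)"
    by (auto simp: dist_commute)
qed

lemma barrel_polar_unit_ball:
  fixes j :: "'x::real_vector \<Rightarrow> 'h::real_inner"
  assumes tvs: "tvs T" and lin: "linear j"
    and cont: "\<And>w. continuous_map T euclideanreal (\<lambda>x. inner (j w) (j x))"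
  shows "barrel T {x. \<forall>w. norm (j w) \<le> 1 \<longrightarrow> \<bar>inner (j w) (j x)\<bar> \<le> 1}"
    (is "barrel T ?B")
proof -
  have B: "?B = (\<Inter>w\<in>{w. norm (j w) \<le> 1}. (\<lambda>x. inner (j w) (j x)) -` {-1..1})"
    by (auto simp: abs_le_iff)
  have lin_w: "linear (\<lambda>x. inner (j w) (j x))" for w
    using linear_compose[OF lin bounded_linear.linear[OF bounded_linear_inner_right]]
    by (simp add: o_def)
  have "closedin T ((\<lambda>x. inner (j w) (j x)) -` {-1..1})" for w
  proof -
    have "closedin T {x \<in> topspace T. inner (j w) (j x) \<in> {-1..1}}"
      by (rule closedin_continuous_map_preimage[OF cont]) simp
    moreover have "topspace T = UNIV" using tvs by (simp add: tvs_def)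
    ultimately show ?thesis by (simp add: vimage_def)
  qed
  moreover have "0 \<in> {w. norm (j w) \<le> 1}" using linear_0[OF lin] by simp
  ultimately have "closedin T ?B" unfolding B by (intro closedin_INT) blast+
  moreover have "convex ?B"
    unfolding B by (intro convex_INT convex_linear_vimage lin_w) simp
  moreover have "c *\<^sub>R x \<in> ?B" if "\<bar>c\<bar> \<le> 1" "x \<in> ?B" for c x
    using that by (auto simp: linear_scale[OF lin] abs_mult intro: mult_le_one)
  moreover have "\<exists>e>0. \<forall>t. \<bar>t\<bar> \<le> e \<longrightarrow> t *\<^sub>R x \<in> ?B" for x
  proof (intro exI conjI allI impI)
    show "1 / (norm (j x) + 1) > 0" by (simp add: add_nonneg_pos)
    fix t assume t: "\<bar>t\<bar> \<le> 1 / (norm (j x) + 1)"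
    have "\<bar>inner (j w) (j (t *\<^sub>R x))\<bar> \<le> 1" if "norm (j w) \<le> 1" for w
    proof -
      have "\<bar>inner (j w) (j (t *\<^sub>R x))\<bar> \<le> \<bar>t\<bar> * (norm (j w) * norm (j x))"
        using mult_left_mono[OF Cauchy_Schwarz_ineq2[of "j w" "j x"] abs_ge_zero[of t]]
        by (simp add: linear_scale[OF lin] abs_mult)
      also have "\<dots> \<le> (1 / (norm (j x) + 1)) * (1 * (norm (j x) + 1))"
        using t that by (intro mult_mono) auto
      finally show ?thesis using norm_ge_zero[of "j x"] by (simp split: if_splits)
    qed
    then show "t *\<^sub>R x \<in> ?B" by blast
  qed
  ultimately show ?thesis unfolding barrel_def by blast
qed

lemma barreled_unit_ball_nbhd:
  fixes j :: "'x::real_vector \<Rightarrow> 'h::real_inner"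
  assumes barreled: "barreled T" and lin: "linear j"
    and cont: "\<And>w. continuous_map T euclideanreal (\<lambda>x. inner (j w) (j x))"
  obtains U where "openin T U" "0 \<in> U" "\<And>x. x \<in> U \<Longrightarrow> norm (j x) \<le> 1"
proof -
  let ?B = "{x. \<forall>w. norm (j w) \<le> 1 \<longrightarrow> \<bar>inner (j w) (j x)\<bar> \<le> 1}"
  have tvs: "tvs T" using barreled by (simp add: barreled_def)
  obtain U where U: "openin T U" "0 \<in> U" "U \<subseteq> ?B"
    using barreled barrel_polar_unit_ball[OF tvs lin cont] unfolding barreled_def by meson
  \<comment> \<open>test the polar condition against the unit vector in direction \<open>j x\<close>\<close>
  have "norm (j x) \<le> 1" if "x \<in> ?B" for x
  proof (rule ccontr)
    assume "\<not> norm (j x) \<le> 1"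
    then have n: "norm (j x) > 1" and "j x \<noteq> 0" by auto
    define w where "w = (1 / norm (j x)) *\<^sub>R x"
    have jw: "j w = (1 / norm (j x)) *\<^sub>R j x" unfolding w_def by (simp add: linear_scale[OF lin])
    have "norm (j w) = 1" "inner (j w) (j x) = norm (j x)"
      using n \<open>j x \<noteq> 0\<close> unfolding jw by (simp_all add: power2_norm_eq_inner[symmetric] power2_eq_square)
    moreover from that have "norm (j w) \<le> 1 \<Longrightarrow> \<bar>inner (j w) (j x)\<bar> \<le> 1" by blast
    ultimately show False using n by simp
  qed
  with U show ?thesis using that by (meson subsetD)
qed

lemma barreled_inner_in_cdual:
  fixes j :: "'x::real_vector \<Rightarrow> 'h::real_inner"
  assumes barreled: "barreled T" and lin: "linear j"
    and cont: "\<And>w. continuous_map T euclideanreal (\<lambda>x. inner (j w) (j x))"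
  shows "(\<lambda>x. inner (j x) u) \<in> cdual T"
proof -
  obtain U where U: "openin T U" "0 \<in> U" "\<And>x. x \<in> U \<Longrightarrow> norm (j x) \<le> 1"
    using barreled_unit_ball_nbhd[OF barreled lin cont] by blast
  have lin_u: "linear (\<lambda>x. inner (j x) u)"
    using linear_compose[OF lin bounded_linear.linear[OF bounded_linear_inner_left]]
    by (simp add: o_def)
  have "\<bar>inner (j x) u\<bar> \<le> norm u" if "x \<in> U" for x
    using Cauchy_Schwarz_ineq2[of "j x" u] mult_right_mono[OF U(3)[OF that] norm_ge_zero[of u]]
    by linarith
  moreover have "tvs T" using barreled by (simp add: barreled_def)
  ultimately have "continuous_map T euclideanreal (\<lambda>x. inner (j x) u)"
    using tvs_linear_continuous_if_bounded[OF _ lin_u U(1,2)] by blast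
  then show ?thesis using lin_u unfolding cdual_def by simp
qed

section \<open>Weak-* duals and the boundary map\<close>

lemma continuous_map_weak_star_iff:
  "continuous_map X (weak_star D) F \<longleftrightarrow>
     F ` topspace X \<subseteq> D \<and> (\<forall>f. continuous_map X euclideanreal (\<lambda>x. F x f))"
  unfolding weak_star_def continuous_map_in_subtopology continuous_map_componentwise_UNIV
  by auto

lemma continuous_map_weak_star_eval: "continuous_map (weak_star D) euclideanreal (\<lambda>g. g f)"
  unfolding weak_star_def
  by (rule continuous_map_from_subtopology) (rule continuous_map_product_projection, simp)

lemma restr_in_sdual:
  assumes S: "subspace S" and u: "u \<in> cdual T"
  shows "restr S u \<in> sdual T S"
proof -
  have lin: "linear u" and cont: "continuous_map T euclideanreal u"
    using u unfolding cdual_def by auto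
  have "continuous_map (subtopology T S) euclideanreal (restr S u)"
    by (rule continuous_map_eq[OF continuous_map_from_subtopology[OF cont]]) (simp add: restr_def)
  with S lin show ?thesis
    unfolding sdual_def by (simp add: restr_def subspace_add subspace_scale linear_add linear_scale)
qed

lemma linear_bd_restr:
  assumes S: "subspace S"
    and bd_add: "\<And>u v. u \<in> sdual T S \<Longrightarrow> v \<in> sdual T S \<Longrightarrow> bd (\<lambda>x. u x + v x) = (\<lambda>y. bd u y + bd v y)"
    and bd_scale: "\<And>c u. u \<in> sdual T S \<Longrightarrow> bd (\<lambda>x. c * u x) = (\<lambda>y. c * bd u y)"
    and dual: "\<And>u. \<Phi> u \<in> cdual T"
    and \<Phi>_add: "\<And>a b. \<Phi> (a + b) = (\<lambda>x. \<Phi> a x + \<Phi> b x)"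
    and \<Phi>_scale: "\<And>c a. \<Phi> (c *\<^sub>R a) = (\<lambda>x. c * \<Phi> a x)"
  shows "linear (\<lambda>u. bd (restr S (\<Phi> u)) f)"
proof -
  have sd: "restr S (\<Phi> u) \<in> sdual T S" for u by (rule restr_in_sdual[OF S dual])
  show ?thesis
  proof (rule linearI)
    fix a b
    have "restr S (\<Phi> (a + b)) = (\<lambda>x. restr S (\<Phi> a) x + restr S (\<Phi> b) x)"
      by (auto simp: restr_def \<Phi>_add)
    then show "bd (restr S (\<Phi> (a + b))) f = bd (restr S (\<Phi> a)) f + bd (restr S (\<Phi> b)) f"
      using bd_add[OF sd sd] by simp
  next
    fix c :: real and a
    have "restr S (\<Phi> (c *\<^sub>R a)) = (\<lambda>x. c * restr S (\<Phi> a) x)"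
      by (auto simp: restr_def \<Phi>_scale)
    then show "bd (restr S (\<Phi> (c *\<^sub>R a))) f = c *\<^sub>R bd (restr S (\<Phi> a)) f"
      using bd_scale[OF sd] by simp
  qed
qed

theorem lemma2p1:
  fixes TX :: "'x::real_vector topology"
    and TB :: "'b::real_vector topology"
    and \<sigma> \<eta> :: "'x \<Rightarrow> 'x \<Rightarrow> real"
    and Xbulk :: "'x set"
    and bd :: "('x \<Rightarrow> real) \<Rightarrow> ('b \<Rightarrow> real)"
    and j :: "'x \<Rightarrow> 'h::{real_inner, complete_space}"
  assumes barreled: "barreled TX"
    and sympl: "symplectic_form \<sigma>"
    and bulk: "subspace Xbulk"
    and bd_tvs: "tvs TB"
    and bd_maps: "bd ` sdual TX Xbulk \<subseteq> cdual TB"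
    and bd_add: "\<And>u v. u \<in> sdual TX Xbulk \<Longrightarrow> v \<in> sdual TX Xbulk \<Longrightarrow> bd (\<lambda>x. u x + v x) = (\<lambda>y. bd u y + bd v y)"
    and bd_scale: "\<And>c u. u \<in> sdual TX Xbulk \<Longrightarrow> bd (\<lambda>x. c * u x) = (\<lambda>y. c * bd u y)"
    and bd_cont: "continuous_map (weak_star (cdual TX)) (weak_star (cdual TB))
                    (\<lambda>u. bd (restr Xbulk u))"
    and eta_lin: "\<And>v. linear (\<eta> v)"
    and eta_sym: "\<And>v w. \<eta> v w = \<eta> w v"
    and eta_pos: "\<And>v. v \<noteq> 0 \<Longrightarrow> \<eta> v v > 0"
    and sigma_bound: "\<And>v1 v2. \<bar>\<sigma> v1 v2\<bar> \<le> sqrt (\<eta> v1 v1) * sqrt (\<eta> v2 v2)"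
    and cpl_lin: "linear j"
    and cpl_inner: "\<And>v w. inner (j v) (j w) = \<eta> v w"
    and cpl_dense: "closure (range j) = UNIV"
    and hyp1: "continuous_map TX (weak_star (cdual TX)) (\<lambda>v w. \<eta> w v)"
  shows "(\<forall>\<u>. (\<lambda>v. inner (j v) \<u>) \<in> cdual TX)
       \<and> (\<forall>f. linear (\<lambda>\<u>. bd (restr Xbulk (\<lambda>v. inner (j v) \<u>)) f)
              \<and> continuous_on UNIV (\<lambda>\<u>. bd (restr Xbulk (\<lambda>v. inner (j v) \<u>)) f)
              \<and> (\<exists>!p. \<forall>\<u>. inner p \<u> = bd (restr Xbulk (\<lambda>v. inner (j v) \<u>)) f))
       \<and> ((\<forall>u\<in>cdual TX. bd (restr Xbulk u) = (\<lambda>_. 0) \<longrightarrow> (\<forall>x\<in>Xbulk. u x = 0)) \<longrightarrow>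
            closure (j ` Xbulk) \<subseteq>
            closure (range (\<lambda>f. THE p. \<forall>\<u>. inner p \<u> = bd (restr Xbulk (\<lambda>v. inner (j v) \<u>)) f)))"
proof -
  define B where "B u f = bd (restr Xbulk (\<lambda>v. inner (j v) u)) f" for u f
  have "continuous_map TX euclideanreal (\<lambda>x. inner (j w) (j x))" for w
    using hyp1 cpl_inner by (simp add: continuous_map_weak_star_iff)
  then have dual: "(\<lambda>v. inner (j v) u) \<in> cdual TX" for u
    by (rule barreled_inner_in_cdual[OF barreled cpl_lin])
  have lin: "linear (\<lambda>u. B u f)" for f
    unfolding B_def using bulk bd_add bd_scale dual
    by (rule linear_bd_restr) (simp_all add: inner_add_right)
  have "continuous_map euclidean (weak_star (cdual TX)) (\<lambda>u v. inner (j v) u)"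
    using dual by (auto simp: continuous_map_weak_star_iff intro: continuous_intros)
  from continuous_map_compose[OF continuous_map_compose[OF this bd_cont] continuous_map_weak_star_eval]
  have cont: "continuous_on UNIV (\<lambda>u. B u f)" for f
    unfolding B_def o_def by simp
  have lin_f: "linear (B u)" for u
    using bd_maps restr_in_sdual[OF bulk dual] unfolding B_def cdual_def by auto
  have "closure (j ` Xbulk) \<subseteq> closure (range (\<lambda>f. riesz_rep (\<lambda>u. B u f)))"
    if hyp2: "\<forall>u\<in>cdual TX. bd (restr Xbulk u) = (\<lambda>_. 0) \<longrightarrow> (\<forall>x\<in>Xbulk. u x = 0)"
  proof (intro closure_minimal image_subsetI closed_closure closure_range_riesz_rep[OF lin cont lin_f])
    fix x u assume "x \<in> Xbulk" "\<forall>f. B u f = 0"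
    then have "bd (restr Xbulk (\<lambda>v. inner (j v) u)) = (\<lambda>_. 0)" by (auto simp: B_def)
    then show "inner (j x) u = 0" using hyp2 dual \<open>x \<in> Xbulk\<close> by blast
  qed
  then show ?thesis
    using dual lin cont riesz_representation[OF lin cont] unfolding B_def riesz_rep_def by blast
qed

end
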